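(* Let $z\ge0$ be an integer. If an undirected multigraph $G$ has a $z$-antler $(C_1,F_1)$ and $G-(C_1\cup F_1)$ has a $z$-antler $(C_2,F_2)$, then $(C_1\cup C_2,\,F_1\cup F_2)$ is a $z$-antler in $G$.
   Context: A feedback vertex set (FVS) of $G$ is a set $X\subseteq V(G)$ with $G-X$ acyclic (self-loops and pairs of parallel edges count as cycles); $\mathrm{fvs}(G)$ is its minimum size. For disjoint $X,Y$, $e(X,Y)$ is the number of edges between $X$ and $Y$. A feedback vertex cut (FVC) in $G$ is a pair of disjoint sets $C,F\subseteq V(G)$ such that $G[F]$ is a forest and every tree $T$ of $G[F]$ satisfies $e(V(T),V(G)\setminus(C\cup F))\le1$. An antler is a FVC $(C,F)$ with $|C|\le\mathrm{fvs}(G[C\cup F])$. For $C\subseteq V(G)$, a $C$-certificate is a subgraph $H$ of $G$ such that $C$ is a minimum FVS of $H$; it has order $z$ if every component $H'$ of $H$ satisfies $\mathrm{fvs}(H')=|C\cap V(H')|\le z$. A $z$-antler is an antler $(C,F)$ such that $G[C\cup F]$ contains a $C$-certificate of order $z$. *)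

theory Defs
  imports Main "HOL-Library.Multiset"
begin

text \<open>Undirected multigraphs: a vertex set and a multiset of edges; an edge is a
  set of one (self-loop) or two (ordinary edge) vertices.\<close>

type_synonym 'a mgraph = "'a set \<times> 'a set multiset"

definition verts :: "'a mgraph \<Rightarrow> 'a set" where "verts G = fst G"
definition edges :: "'a mgraph \<Rightarrow> 'a set multiset" where "edges G = snd G"

definition wf_mgraph :: "'a mgraph \<Rightarrow> bool" where
  "wf_mgraph G \<longleftrightarrow> finite (verts G) \<and>
     (\<forall>e \<in># edges G. e \<subseteq> verts G \<and> 1 \<le> card e \<and> card e \<le> 2)"

definition subgraph :: "'a mgraph \<Rightarrow> 'a mgraph \<Rightarrow> bool" where
  "subgraph H G \<longleftrightarrow> wf_mgraph H \<and> verts H \<subseteq> verts G \<and> edges H \<subseteq># edges G"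

definition induce :: "'a mgraph \<Rightarrow> 'a set \<Rightarrow> 'a mgraph" where
  "induce G X = (verts G \<inter> X, filter_mset (\<lambda>e. e \<subseteq> X) (edges G))"

definition del_verts :: "'a mgraph \<Rightarrow> 'a set \<Rightarrow> 'a mgraph" where
  "del_verts G X = induce G (verts G - X)"

definition acyclic_mg :: "'a mgraph \<Rightarrow> bool" where
  "acyclic_mg G \<longleftrightarrow>
     (\<forall>v. count (edges G) {v} = 0) \<and>
     (\<forall>u v. u \<noteq> v \<longrightarrow> count (edges G) {u, v} \<le> 1) \<and>
     \<not> (\<exists>vs. length vs \<ge> 3 \<and> distinct vs \<and> set vs \<subseteq> verts G \<and>
           (\<forall>i < length vs - 1. {vs ! i, vs ! (i+1)} \<in># edges G) \<and>
           {last vs, hd vs} \<in># edges G)"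

definition is_fvs :: "'a mgraph \<Rightarrow> 'a set \<Rightarrow> bool" where
  "is_fvs G X \<longleftrightarrow> X \<subseteq> verts G \<and> acyclic_mg (del_verts G X)"

definition fvs :: "'a mgraph \<Rightarrow> nat" where
  "fvs G = Min {card X | X. is_fvs G X}"

definition adj :: "'a mgraph \<Rightarrow> 'a \<Rightarrow> 'a \<Rightarrow> bool" where
  "adj G u v \<longleftrightarrow> u \<noteq> v \<and> {u, v} \<in># edges G"

definition component_verts :: "'a mgraph \<Rightarrow> 'a set set" where
  "component_verts G = (\<lambda>v. {u. (adj G)\<^sup>*\<^sup>* v u}) ` verts G"

definition components :: "'a mgraph \<Rightarrow> 'a mgraph set" where
  "components G = (\<lambda>S. induce G S) ` component_verts G"

definition e_between :: "'a mgraph \<Rightarrow> 'a set \<Rightarrow> 'a set \<Rightarrow> nat" where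
  "e_between G X Y = size (filter_mset (\<lambda>e. e \<inter> X \<noteq> {} \<and> e \<inter> Y \<noteq> {}) (edges G))"

definition is_fvc :: "'a mgraph \<Rightarrow> 'a set \<Rightarrow> 'a set \<Rightarrow> bool" where
  "is_fvc G C F \<longleftrightarrow> C \<subseteq> verts G \<and> F \<subseteq> verts G \<and> C \<inter> F = {} \<and>
     acyclic_mg (induce G F) \<and>
     (\<forall>T \<in> components (induce G F).
        e_between G (verts T) (verts G - (C \<union> F)) \<le> 1)"

definition is_antler :: "'a mgraph \<Rightarrow> 'a set \<Rightarrow> 'a set \<Rightarrow> bool" where
  "is_antler G C F \<longleftrightarrow> is_fvc G C F \<and> card C \<le> fvs (induce G (C \<union> F))"

definition is_certificate :: "'a mgraph \<Rightarrow> 'a set \<Rightarrow> 'a mgraph \<Rightarrow> bool" where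
  "is_certificate G C H \<longleftrightarrow> subgraph H G \<and> is_fvs H C \<and> card C = fvs H"

definition certificate_order :: "'a mgraph \<Rightarrow> 'a set \<Rightarrow> nat \<Rightarrow> bool" where
  "certificate_order H C z \<longleftrightarrow>
     (\<forall>H' \<in> components H. fvs H' = card (C \<inter> verts H') \<and> card (C \<inter> verts H') \<le> z)"

definition is_z_antler :: "'a mgraph \<Rightarrow> nat \<Rightarrow> 'a set \<Rightarrow> 'a set \<Rightarrow> bool" where
  "is_z_antler G z C F \<longleftrightarrow> is_antler G C F \<and>
     (\<exists>H. is_certificate (induce G (C \<union> F)) C H \<and> certificate_order H C z)"

end

theory Submission
  imports Defs
begin

(* Every tree of G[F1] has at most one edge to V - (C1 \<union> F1), and this set contains F2 as
   well as everything outside C1 \<union> C2 \<union> F1 \<union> F2.  Hence a cycle of G[F1 \<union> F2] cannot enter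
   and leave a tree of G[F1], and a tree of G[F1 \<union> F2] meeting F2 is a tree T2 of G[F2] with
   trees of G[F1] hanging from it, each spending its single outgoing edge on the attachment;
   so its edges to the rest of G all leave from T2.  The certificates of the two antlers live
   on the disjoint sets C1 \<union> F1 and C2 \<union> F2, and their disjoint union certifies C1 \<union> C2
   because minimum feedback vertex sets and components split over disjoint unions. *)

definition mg_union :: "'a mgraph \<Rightarrow> 'a mgraph \<Rightarrow> 'a mgraph" where
  "mg_union A B = (verts A \<union> verts B, edges A + edges B)"

definition component_of :: "'a mgraph \<Rightarrow> 'a \<Rightarrow> 'a set" where
  "component_of H v = verts H \<inter> {u. (adj H)\<^sup>*\<^sup>* v u}"

lemma verts_pair [simp]: "verts (V, E) = V"
  by (simp add: verts_def)

lemma edges_pair [simp]: "edges (V, E) = E"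
  by (simp add: edges_def)

lemma verts_induce [simp]: "verts (induce G X) = verts G \<inter> X"
  by (simp add: induce_def)

lemma edges_induce [simp]: "edges (induce G X) = filter_mset (\<lambda>e. e \<subseteq> X) (edges G)"
  by (simp add: induce_def)

lemma verts_del_verts [simp]: "verts (del_verts G X) = verts G - X"
  by (auto simp: del_verts_def)

lemma edges_del_verts [simp]:
  "edges (del_verts G X) = filter_mset (\<lambda>e. e \<subseteq> verts G - X) (edges G)"
  by (simp add: del_verts_def)

lemma verts_mg_union [simp]: "verts (mg_union A B) = verts A \<union> verts B"
  by (simp add: mg_union_def)

lemma edges_mg_union [simp]: "edges (mg_union A B) = edges A + edges B"
  by (simp add: mg_union_def)

lemma mgraph_eqI: "verts A = verts B \<Longrightarrow> edges A = edges B \<Longrightarrow> A = B"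
  by (cases A, cases B) (simp add: verts_def edges_def)

lemma mg_union_commute: "mg_union A B = mg_union B A"
  by (simp add: mg_union_def Un_commute add.commute)

lemma adj_induce [simp]: "adj (induce G X) u v \<longleftrightarrow> adj G u v \<and> u \<in> X \<and> v \<in> X"
  by (auto simp: adj_def)

lemma adj_mg_union [simp]: "adj (mg_union A B) u v \<longleftrightarrow> adj A u v \<or> adj B u v"
  by (auto simp: adj_def)

lemma wf_mgraph_induce: "wf_mgraph G \<Longrightarrow> wf_mgraph (induce G X)"
  unfolding wf_mgraph_def by auto

lemma wf_mgraph_mg_union: "wf_mgraph A \<Longrightarrow> wf_mgraph B \<Longrightarrow> wf_mgraph (mg_union A B)"
  unfolding wf_mgraph_def by auto

lemma wf_mgraph_finite: "wf_mgraph G \<Longrightarrow> finite (verts G)"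
  unfolding wf_mgraph_def by simp

lemma wf_mgraph_edgeD:
  assumes "wf_mgraph G" "e \<in># edges G"
  shows "e \<subseteq> verts G" "e \<noteq> {}" "finite e" "card e \<le> 2"
  using assms unfolding wf_mgraph_def by (auto intro: finite_subset)

lemma wf_mgraph_edge_pair:
  assumes "wf_mgraph G" "e \<in># edges G" "x \<in> e" "y \<in> e" "x \<noteq> y"
  shows "e = {x, y}"
proof (rule sym, rule card_seteq)
  show "finite e" "card e \<le> card {x, y}"
    using assms wf_mgraph_edgeD[OF assms(1,2)] by auto
qed (use assms in auto)

lemma adj_sym: "adj G u v \<longleftrightarrow> adj G v u"
  unfolding adj_def by (auto simp: insert_commute)

lemma adj_in_verts: "wf_mgraph G \<Longrightarrow> adj G u v \<Longrightarrow> u \<in> verts G \<and> v \<in> verts G"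
  unfolding adj_def using wf_mgraph_edgeD(1) by blast

lemma component_of_subset_verts: "component_of H v \<subseteq> verts H"
  by (simp add: component_of_def)

lemma component_of_induce_subset: "component_of (induce G X) x \<subseteq> verts G \<inter> X"
  using component_of_subset_verts by fastforce

lemma component_of_self: "v \<in> verts H \<Longrightarrow> v \<in> component_of H v"
  by (simp add: component_of_def)

lemma component_of_adj:
  "wf_mgraph H \<Longrightarrow> y \<in> component_of H v \<Longrightarrow> adj H y z \<Longrightarrow> z \<in> component_of H v"
  unfolding component_of_def using adj_in_verts by (fastforce intro: rtranclp.rtrancl_into_rtrancl)

lemma component_of_subset_closed:
  assumes "w \<in> S" and closed: "\<And>y z. y \<in> S \<Longrightarrow> adj H y z \<Longrightarrow> z \<in> S"
  shows "component_of H w \<subseteq> S"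
proof
  fix u assume "u \<in> component_of H w"
  then have "(adj H)\<^sup>*\<^sup>* w u" by (simp add: component_of_def)
  then show "u \<in> S"
    by (induction rule: rtranclp_induct) (use assms in blast)+
qed

lemma component_of_eq:
  assumes "w \<in> component_of H v"
  shows "component_of H w = component_of H v"
proof -
  have "symp (adj H)" by (auto intro: sympI simp: adj_sym)
  then have "symp (adj H)\<^sup>*\<^sup>*" by (rule symp_rtranclp)
  then show ?thesis
    using assms unfolding component_of_def by (auto dest: sympD intro: rtranclp_trans)
qed

lemma verts_components: "verts ` components H = component_of H ` verts H"
  unfolding components_def component_verts_def component_of_def by (auto simp: image_image)

lemma is_fvc_iff:
  "is_fvc G C F \<longleftrightarrow> C \<subseteq> verts G \<and> F \<subseteq> verts G \<and> C \<inter> F = {} \<and> acyclic_mg (induce G F) \<and>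
     (\<forall>x \<in> verts G \<inter> F. e_between G (component_of (induce G F) x) (verts G - (C \<union> F)) \<le> 1)"
proof -
  let ?P = "\<lambda>S. e_between G S (verts G - (C \<union> F)) \<le> 1"
  have "(\<forall>T \<in> components (induce G F). ?P (verts T)) \<longleftrightarrow>
      (\<forall>S \<in> verts ` components (induce G F). ?P S)"
    by blast
  also have "\<dots> \<longleftrightarrow> (\<forall>x \<in> verts G \<inter> F. ?P (component_of (induce G F) x))"
    by (simp add: verts_components)
  finally show ?thesis unfolding is_fvc_def by simp
qed

lemma e_between_le:
  assumes "\<And>e. e \<in># edges G \<Longrightarrow> e \<inter> X \<noteq> {} \<Longrightarrow> e \<inter> Y \<noteq> {} \<Longrightarrow> e \<inter> X' \<noteq> {} \<and> e \<inter> Y' \<noteq> {}"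
  shows "e_between G X Y \<le> e_between G X' Y'"
  unfolding e_between_def by (rule size_mset_mono, rule filter_mset_mono_strong) (use assms in auto)

(* Membership in edges G - {#e#} covers a second edge as well as a parallel copy of e. *)
lemma e_between_le_1D:
  assumes "e_between G X Y \<le> 1" "e \<in># edges G" "e' \<in># edges G - {#e#}"
    and "e \<inter> X \<noteq> {}" "e \<inter> Y \<noteq> {}" "e' \<inter> X \<noteq> {}" "e' \<inter> Y \<noteq> {}"
  shows False
proof -
  let ?M = "filter_mset (\<lambda>e. e \<inter> X \<noteq> {} \<and> e \<inter> Y \<noteq> {}) (edges G)"
  have "e \<in># ?M" "e' \<in># ?M - {#e#}"
    using assms(2-) by (auto simp: in_diff_count)
  then have "{#e, e'#} \<subseteq># ?M" by (simp add: insert_subset_eq_iff)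
  then have "2 \<le> e_between G X Y" unfolding e_between_def using size_mset_mono by fastforce
  then show False using assms(1) by simp
qed

lemma induce_del_verts:
  assumes "wf_mgraph G" "F \<inter> D = {}"
  shows "induce (del_verts G D) F = induce G F"
proof (rule mgraph_eqI)
  show "edges (induce (del_verts G D) F) = edges (induce G F)"
    using assms wf_mgraph_edgeD(1)[OF assms(1)] by (auto simp: filter_filter_mset intro!: filter_mset_cong)
qed (use assms in auto)

lemma e_between_del_verts:
  assumes "wf_mgraph G" "X \<inter> Y = {}" "X \<union> Y \<subseteq> verts G - D"
  shows "e_between (del_verts G D) X Y = e_between G X Y"
proof -
  have "e \<subseteq> verts G - D" if e: "e \<in># edges G" "e \<inter> X \<noteq> {}" "e \<inter> Y \<noteq> {}" for e
  proof -
    obtain x y where x: "x \<in> e \<inter> X" and y: "y \<in> e \<inter> Y" using e by blast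
    then have "e = {x, y}" using assms(2) wf_mgraph_edge_pair[OF assms(1) e(1)] by blast
    with x y show ?thesis using assms(3) by blast
  qed
  then show ?thesis
    unfolding e_between_def by (auto simp: filter_filter_mset intro!: arg_cong[where f = size] filter_mset_cong)
qed

section \<open>Cycles\<close>

definition is_cycle :: "'a set \<Rightarrow> 'a set multiset \<Rightarrow> 'a list \<Rightarrow> bool" where
  "is_cycle V E vs \<longleftrightarrow> length vs \<ge> 3 \<and> distinct vs \<and> set vs \<subseteq> V \<and>
     (\<forall>i < length vs - 1. {vs ! i, vs ! (i+1)} \<in># E) \<and> {last vs, hd vs} \<in># E"

lemma acyclic_mg_iff:
  "acyclic_mg G \<longleftrightarrow> (\<forall>v. count (edges G) {v} = 0) \<and>
     (\<forall>u v. u \<noteq> v \<longrightarrow> count (edges G) {u, v} \<le> 1) \<and> (\<nexists>vs. is_cycle (verts G) (edges G) vs)"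
  by (simp add: acyclic_mg_def is_cycle_def)

lemma is_cycle_edge:
  assumes "is_cycle V E vs" "i < length vs"
  shows "{vs ! i, vs ! (Suc i mod length vs)} \<in># E"
proof (cases "Suc i < length vs")
  case True
  then show ?thesis using assms by (simp add: is_cycle_def)
next
  case False
  then have "i = length vs - 1" "vs \<noteq> []" using assms(2) by auto
  then show ?thesis using assms by (simp add: is_cycle_def last_conv_nth hd_conv_nth)
qed

lemma acyclic_mg_no_cycle:
  assumes "acyclic_mg K" "is_cycle V E vs" "set vs \<subseteq> verts K"
    and sub: "\<And>e. e \<in># E \<Longrightarrow> e \<subseteq> set vs \<Longrightarrow> e \<in># edges K"
  shows False
proof -
  have "vs \<noteq> []" using assms(2) by (auto simp: is_cycle_def)
  then have "{last vs, hd vs} \<in># edges K"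
    using assms(2) by (intro sub) (auto simp: is_cycle_def)
  moreover have "{vs ! i, vs ! (i+1)} \<in># edges K" if "i < length vs - 1" for i
    using assms(2) that by (intro sub) (auto simp: is_cycle_def)
  ultimately have "is_cycle (verts K) (edges K) vs"
    using assms(2,3) by (simp add: is_cycle_def)
  then show False using assms(1) by (simp add: acyclic_mg_iff)
qed

lemma acyclic_mg_mono:
  assumes "acyclic_mg K" "verts H \<subseteq> verts K" "edges H \<subseteq># edges K"
  shows "acyclic_mg H"
proof -
  have le: "count (edges H) e \<le> count (edges K) e" for e
    using assms(3) by (simp add: mset_subset_eq_count)
  have "count (edges H) {v} = 0" for v
    using le[of "{v}"] assms(1) by (simp add: acyclic_mg_iff)
  moreover have "count (edges H) {u, v} \<le> 1" if "u \<noteq> v" for u v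
    using le_trans[OF le[of "{u, v}"]] assms(1) that unfolding acyclic_mg_iff by blast
  moreover have "\<not> is_cycle (verts H) (edges H) vs" for vs
  proof
    assume cyc: "is_cycle (verts H) (edges H) vs"
    show False
    proof (rule acyclic_mg_no_cycle[OF assms(1) cyc])
      show "set vs \<subseteq> verts K" using cyc assms(2) by (auto simp: is_cycle_def)
    qed (use mset_subset_eqD[OF assms(3)] in blast)
  qed
  ultimately show ?thesis unfolding acyclic_mg_iff by blast
qed

lemma cyclic_change_point:
  fixes P :: "nat \<Rightarrow> bool"
  assumes "a < n" "P a" "b < n" "\<not> P b"
  obtains i where "i < n" "P i" "\<not> P (Suc i mod n)"
proof -
  have "P ((a + k) mod n)" if "\<forall>i<n. P i \<longrightarrow> P (Suc i mod n)" for k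
  proof (induction k)
    case (Suc k)
    then show ?case using that[rule_format, of "(a + k) mod n"] assms(1) by (simp add: mod_Suc_eq)
  qed (use assms in simp)
  from this[of "b + n - a"] assms that show thesis by auto
qed

lemma Suc_Suc_mod_neq_self:
  assumes "3 \<le> (n::nat)" "i < n"
  shows "Suc (Suc i mod n) mod n \<noteq> i"
proof (cases "Suc (Suc i) < n")
  case False
  then consider "Suc i = n" | "Suc (Suc i) = n" using assms(2) by linarith
  then show ?thesis using assms(1) by cases auto
qed simp

lemma is_cycle_crossing:
  assumes cyc: "is_cycle V E vs" and "a \<in> set vs" "a \<in> S" "b \<in> set vs" "b \<notin> S"
  obtains e e' where "e \<in># E" "e' \<in># E - {#e#}"
    "e \<inter> S \<noteq> {}" "\<not> e \<subseteq> S" "e' \<inter> S \<noteq> {}" "\<not> e' \<subseteq> S"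
proof -
  define n where "n = length vs"
  define edge where "edge k = {vs ! k, vs ! (Suc k mod n)}" for k
  have n: "3 \<le> n" and dist: "distinct vs" using cyc by (auto simp: is_cycle_def n_def)
  obtain ia ib where "ia < n" "vs ! ia \<in> S" "ib < n" "vs ! ib \<notin> S"
    using assms(2-) unfolding n_def by (metis in_set_conv_nth)
  then obtain i j where i: "i < n" "vs ! i \<in> S" "vs ! (Suc i mod n) \<notin> S"
    and j: "j < n" "vs ! j \<notin> S" "vs ! (Suc j mod n) \<in> S"
    using cyclic_change_point[of ia n "\<lambda>k. vs ! k \<in> S" ib]
      cyclic_change_point[of ib n "\<lambda>k. vs ! k \<notin> S" ia] by metis
  have "edge i \<noteq> edge j"
  proof
    assume "edge i = edge j"
    then have "vs ! i = vs ! (Suc j mod n)" "vs ! (Suc i mod n) = vs ! j"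
      using i j unfolding edge_def by (auto simp: doubleton_eq_iff)
    moreover have "Suc k mod n < n" for k using n by simp
    ultimately have "i = Suc j mod n" "Suc i mod n = j"
      using nth_eq_iff_index_eq[OF dist] i(1) j(1) unfolding n_def by metis+
    then show False using Suc_Suc_mod_neq_self[OF n i(1)] by simp
  qed
  moreover have "edge i \<in># E" "edge j \<in># E"
    using is_cycle_edge[OF cyc] i(1) j(1) unfolding edge_def n_def by auto
  ultimately have "edge j \<in># E - {#edge i#}"
    by (simp add: in_diff_count count_single)
  moreover have "edge i \<inter> S \<noteq> {}" "\<not> edge i \<subseteq> S" "edge j \<inter> S \<noteq> {}" "\<not> edge j \<subseteq> S"
    using i j unfolding edge_def by auto
  ultimately show thesis using that \<open>edge i \<in># E\<close> by blast
qed

section \<open>Feedback vertex sets and disjoint unions\<close>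

lemma is_fvs_verts: "is_fvs G (verts G)"
  unfolding is_fvs_def acyclic_mg_iff is_cycle_def by (auto simp: not_in_iff)

lemma finite_fvs_cards: "finite (verts G) \<Longrightarrow> finite {card X |X. is_fvs G X}"
  by (rule finite_subset[of _ "{..card (verts G)}"]) (auto simp: is_fvs_def card_mono)

lemma fvs_le: "finite (verts G) \<Longrightarrow> is_fvs G X \<Longrightarrow> fvs G \<le> card X"
  unfolding fvs_def using finite_fvs_cards by (blast intro: Min_le)

lemma obtain_min_fvs:
  assumes "finite (verts G)"
  obtains X where "is_fvs G X" "card X = fvs G"
proof -
  have "fvs G \<in> {card X |X. is_fvs G X}"
    unfolding fvs_def by (rule Min_in[OF finite_fvs_cards[OF assms]]) (use is_fvs_verts in blast)
  then obtain X where "is_fvs G X" "card X = fvs G" by auto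
  then show thesis by (rule that)
qed

lemma is_fvs_subgraph:
  assumes "is_fvs K X" "verts H \<subseteq> verts K" "edges H \<subseteq># edges K"
  shows "is_fvs H (X \<inter> verts H)"
proof -
  have "acyclic_mg (del_verts H (X \<inter> verts H))"
  proof (rule acyclic_mg_mono)
    show "acyclic_mg (del_verts K X)" using assms(1) by (simp add: is_fvs_def)
    have "filter_mset (\<lambda>e. e \<subseteq> verts H - X \<inter> verts H) (edges H)
        \<subseteq># filter_mset (\<lambda>e. e \<subseteq> verts K - X) (edges K)"
      by (rule filter_mset_mono_strong[OF assms(3)]) (use assms(2) in blast)
    then show "edges (del_verts H (X \<inter> verts H)) \<subseteq># edges (del_verts K X)" by simp
  qed (use assms(2) in auto)
  then show ?thesis by (simp add: is_fvs_def)
qed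

lemma fvs_mono:
  assumes "wf_mgraph K" "subgraph H K"
  shows "fvs H \<le> fvs K"
proof -
  have fin: "finite (verts K)" "finite (verts H)"
    using assms unfolding subgraph_def by (auto simp: wf_mgraph_finite)
  obtain X where X: "is_fvs K X" "card X = fvs K" using obtain_min_fvs[OF fin(1)] .
  have "is_fvs H (X \<inter> verts H)" using is_fvs_subgraph[OF X(1)] assms(2) by (simp add: subgraph_def)
  then have "fvs H \<le> card (X \<inter> verts H)" by (rule fvs_le[OF fin(2)])
  also have "\<dots> \<le> card X" using X(1) fin(1) by (auto simp: is_fvs_def intro: card_mono finite_subset)
  finally show ?thesis using X(2) by simp
qed

lemma mg_union_edge_left:
  assumes "wf_mgraph B" "verts A \<inter> verts B = {}" "e \<in># edges A + edges B" "e \<inter> verts A \<noteq> {}"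
  shows "e \<in># edges A"
  using assms wf_mgraph_edgeD(1)[OF assms(1)] by auto

lemma acyclic_mg_union:
  assumes wf: "wf_mgraph A" "wf_mgraph B" and disj: "verts A \<inter> verts B = {}"
    and acyclic: "acyclic_mg A" "acyclic_mg B"
  shows "acyclic_mg (mg_union A B)"
proof -
  have in_A: "e \<in># edges A" if "e \<in># edges A + edges B" "e \<inter> verts A \<noteq> {}" for e
    using mg_union_edge_left[OF wf(2) disj that] .
  have disj': "verts B \<inter> verts A = {}" using disj by blast
  have in_B: "e \<in># edges B" if "e \<in># edges A + edges B" "e \<inter> verts B \<noteq> {}" for e
  proof (rule mg_union_edge_left[OF wf(1) disj'])
    show "e \<in># edges B + edges A" using that(1) by auto
  qed (use that(2) in simp)
  have "count (edges A + edges B) {u, v} \<le> 1" if "u \<noteq> v" for u v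
  proof (cases "{u, v} \<in># edges A")
    case True
    then have "{u, v} \<subseteq> verts A" using wf_mgraph_edgeD(1)[OF wf(1)] by blast
    then have "{u, v} \<notin># edges B" using wf_mgraph_edgeD(1)[OF wf(2)] disj by auto
    then show ?thesis using acyclic(1) that by (simp add: acyclic_mg_iff not_in_iff)
  next
    case False
    then show ?thesis using acyclic(2) that by (simp add: acyclic_mg_iff not_in_iff)
  qed
  moreover have "\<not> is_cycle (verts A \<union> verts B) (edges A + edges B) vs" for vs
  proof
    assume cyc: "is_cycle (verts A \<union> verts B) (edges A + edges B) vs"
    have nonempty: "e \<noteq> {}" if "e \<in># edges A + edges B" for e
      using wf_mgraph_edgeD(2)[OF wf_mgraph_mg_union[OF wf]] that by simp
    have "set vs \<subseteq> verts A \<union> verts B" using cyc by (simp add: is_cycle_def)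
    then consider "set vs \<subseteq> verts A" | "set vs \<subseteq> verts B"
      | a b where "a \<in> set vs" "a \<in> verts A" "b \<in> set vs" "b \<notin> verts A"
      by blast
    then show False
    proof cases
      case 1
      show False
        by (rule acyclic_mg_no_cycle[OF acyclic(1) cyc 1]) (use 1 nonempty in_A in blast)
    next
      case 2
      show False
        by (rule acyclic_mg_no_cycle[OF acyclic(2) cyc 2]) (use 2 nonempty in_B in blast)
    next
      case 3
      obtain e e' where "e \<in># edges A + edges B" "e' \<in># edges A + edges B - {#e#}"
        "e \<inter> verts A \<noteq> {}" "\<not> e \<subseteq> verts A" "e' \<inter> verts A \<noteq> {}" "\<not> e' \<subseteq> verts A"
        by (rule is_cycle_crossing[OF cyc 3])
      then show False using in_A wf_mgraph_edgeD(1)[OF wf(1)] by blast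
    qed
  qed
  ultimately show ?thesis using acyclic unfolding acyclic_mg_iff by simp
qed

lemma del_verts_mg_union:
  assumes wf: "wf_mgraph A" "wf_mgraph B" and disj: "verts A \<inter> verts B = {}"
    and "X \<subseteq> verts A" "Y \<subseteq> verts B"
  shows "del_verts (mg_union A B) (X \<union> Y) = mg_union (del_verts A X) (del_verts B Y)"
proof (rule mgraph_eqI)
  have "filter_mset (\<lambda>e. e \<subseteq> verts A \<union> verts B - (X \<union> Y)) (edges A)
      = filter_mset (\<lambda>e. e \<subseteq> verts A - X) (edges A)"
    using wf_mgraph_edgeD(1)[OF wf(1)] assms(5) disj by (intro filter_mset_cong) auto
  moreover have "filter_mset (\<lambda>e. e \<subseteq> verts A \<union> verts B - (X \<union> Y)) (edges B)
      = filter_mset (\<lambda>e. e \<subseteq> verts B - Y) (edges B)"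
    using wf_mgraph_edgeD(1)[OF wf(2)] assms(4) disj by (intro filter_mset_cong) auto
  ultimately show "edges (del_verts (mg_union A B) (X \<union> Y)) = edges (mg_union (del_verts A X) (del_verts B Y))"
    by simp
qed (use assms in auto)

lemma is_fvs_mg_union:
  assumes wf: "wf_mgraph A" "wf_mgraph B" and disj: "verts A \<inter> verts B = {}"
    and "is_fvs A X" "is_fvs B Y"
  shows "is_fvs (mg_union A B) (X \<union> Y)"
proof -
  have sub: "X \<subseteq> verts A" "Y \<subseteq> verts B" using assms(4,5) by (simp_all add: is_fvs_def)
  have "acyclic_mg (mg_union (del_verts A X) (del_verts B Y))"
    using assms by (intro acyclic_mg_union) (auto simp: is_fvs_def wf_mgraph_def)
  then show ?thesis using sub by (simp add: is_fvs_def del_verts_mg_union[OF wf disj sub]) blast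
qed

lemma fvs_mg_union:
  assumes wf: "wf_mgraph A" "wf_mgraph B" and disj: "verts A \<inter> verts B = {}"
  shows "fvs (mg_union A B) = fvs A + fvs B"
proof (rule antisym)
  have fin: "finite (verts A)" "finite (verts B)" "finite (verts (mg_union A B))"
    using wf by (simp_all add: wf_mgraph_finite)
  obtain X where X: "is_fvs A X" "card X = fvs A" using obtain_min_fvs[OF fin(1)] .
  obtain Y where Y: "is_fvs B Y" "card Y = fvs B" using obtain_min_fvs[OF fin(2)] .
  have "fvs (mg_union A B) \<le> card (X \<union> Y)"
    by (rule fvs_le[OF fin(3) is_fvs_mg_union[OF wf disj X(1) Y(1)]])
  also have "\<dots> = card X + card Y"
    using X(1) Y(1) disj fin by (intro card_Un_disjoint) (auto simp: is_fvs_def intro: finite_subset)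
  finally show "fvs (mg_union A B) \<le> fvs A + fvs B" using X Y by simp
  obtain Z where Z: "is_fvs (mg_union A B) Z" "card Z = fvs (mg_union A B)"
    using obtain_min_fvs[OF fin(3)] .
  have "fvs A + fvs B \<le> card (Z \<inter> verts A) + card (Z \<inter> verts B)"
    using fvs_le[OF fin(1)] fvs_le[OF fin(2)] is_fvs_subgraph[OF Z(1)] by (simp add: add_mono)
  also have "\<dots> = card (Z \<inter> verts A \<union> Z \<inter> verts B)"
    using disj fin by (intro card_Un_disjoint[symmetric]) auto
  also have "Z \<inter> verts A \<union> Z \<inter> verts B = Z"
    using Z(1) by (auto simp: is_fvs_def)
  finally show "fvs A + fvs B \<le> fvs (mg_union A B)" using Z(2) by simp
qed

lemma rtranclp_adj_in_verts:
  assumes "wf_mgraph G" "(adj G)\<^sup>*\<^sup>* v u" "v \<in> verts G"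
  shows "u \<in> verts G"
  using assms(2) by (induction rule: rtranclp_induct) (use assms adj_in_verts[OF assms(1)] in auto)

lemma rtranclp_adj_mg_union:
  assumes wf: "wf_mgraph A" "wf_mgraph B" and disj: "verts A \<inter> verts B = {}" and v: "v \<in> verts A"
  shows "(adj (mg_union A B))\<^sup>*\<^sup>* v u \<longleftrightarrow> (adj A)\<^sup>*\<^sup>* v u"
proof
  assume "(adj (mg_union A B))\<^sup>*\<^sup>* v u"
  then show "(adj A)\<^sup>*\<^sup>* v u"
  proof (induction rule: rtranclp_induct)
    case (step y z)
    have "y \<in> verts A" using rtranclp_adj_in_verts[OF wf(1) step.IH v] .
    then have "\<not> adj B y z" using adj_in_verts[OF wf(2)] disj by blast
    then show ?case using step by (simp add: rtranclp.rtrancl_into_rtrancl)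
  qed simp
next
  assume "(adj A)\<^sup>*\<^sup>* v u"
  then show "(adj (mg_union A B))\<^sup>*\<^sup>* v u" by (rule mono_rtranclp[rule_format, rotated]) simp
qed

lemma induce_mg_union_left:
  assumes "wf_mgraph B" "verts A \<inter> verts B = {}" "S \<subseteq> verts A"
  shows "induce (mg_union A B) S = induce A S"
proof (rule mgraph_eqI)
  have "\<not> e \<subseteq> S" if "e \<in># edges B" for e
    using wf_mgraph_edgeD(1,2)[OF assms(1) that] assms(2,3) by blast
  then have "filter_mset (\<lambda>e. e \<subseteq> S) (edges B) = {#}"
    by (simp add: filter_mset_eq_conv)
  then show "edges (induce (mg_union A B) S) = edges (induce A S)" by simp
qed (use assms in auto)

lemma components_mg_union_left:
  assumes wf: "wf_mgraph A" "wf_mgraph B" and disj: "verts A \<inter> verts B = {}" and v: "v \<in> verts A"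
  shows "induce (mg_union A B) {u. (adj (mg_union A B))\<^sup>*\<^sup>* v u} \<in> components A"
proof -
  let ?S = "{u. (adj A)\<^sup>*\<^sup>* v u}"
  have "?S \<subseteq> verts A" using rtranclp_adj_in_verts[OF wf(1) _ v] by blast
  then have "induce (mg_union A B) {u. (adj (mg_union A B))\<^sup>*\<^sup>* v u} = induce A ?S"
    using rtranclp_adj_mg_union[OF wf disj v] induce_mg_union_left[OF wf(2) disj] by simp
  then show ?thesis using v unfolding components_def component_verts_def by auto
qed

lemma components_mg_union:
  assumes wf: "wf_mgraph A" "wf_mgraph B" and disj: "verts A \<inter> verts B = {}"
  shows "components (mg_union A B) \<subseteq> components A \<union> components B"
proof
  fix H assume "H \<in> components (mg_union A B)"
  then obtain v where v: "v \<in> verts A \<union> verts B"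
    and H: "H = induce (mg_union A B) {u. (adj (mg_union A B))\<^sup>*\<^sup>* v u}"
    unfolding components_def component_verts_def by auto
  have disj': "verts B \<inter> verts A = {}" using disj by blast
  show "H \<in> components A \<union> components B"
  proof (cases "v \<in> verts A")
    case True
    then show ?thesis using H components_mg_union_left[OF wf disj] by simp
  next
    case False
    then have "v \<in> verts B" using v by simp
    then show ?thesis
      using H components_mg_union_left[OF wf(2,1) disj'] by (simp add: mg_union_commute)
  qed
qed

lemma verts_components_subset: "H' \<in> components H \<Longrightarrow> verts H' \<subseteq> verts H"
  unfolding components_def by auto

lemma certificate_order_mg_union:
  assumes wf: "wf_mgraph H1" "wf_mgraph H2" and disj: "verts H1 \<inter> verts H2 = {}"
    and "C1 \<subseteq> verts H1" "C2 \<subseteq> verts H2"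
    and "certificate_order H1 C1 z" "certificate_order H2 C2 z"
  shows "certificate_order (mg_union H1 H2) (C1 \<union> C2) z"
  unfolding certificate_order_def
proof
  fix H assume "H \<in> components (mg_union H1 H2)"
  then consider "H \<in> components H1" | "H \<in> components H2"
    using components_mg_union[OF wf disj] by blast
  then show "fvs H = card ((C1 \<union> C2) \<inter> verts H) \<and> card ((C1 \<union> C2) \<inter> verts H) \<le> z"
  proof cases
    case 1
    then have "(C1 \<union> C2) \<inter> verts H = C1 \<inter> verts H"
      using verts_components_subset assms(5) disj by blast
    then show ?thesis using assms(6) 1 by (simp add: certificate_order_def)
  next
    case 2
    then have "(C1 \<union> C2) \<inter> verts H = C2 \<inter> verts H"
      using verts_components_subset assms(4) disj by blast
    then show ?thesis using assms(7) 2 by (simp add: certificate_order_def)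
  qed
qed

lemma filter_mset_add_disjoint:
  assumes "\<And>x. x \<in># M \<Longrightarrow> P x \<Longrightarrow> Q x \<Longrightarrow> False"
  shows "filter_mset P M + filter_mset Q M = filter_mset (\<lambda>x. P x \<or> Q x) M"
  using assms by (induction M) auto

lemma subgraph_mg_union_induce:
  assumes wf: "wf_mgraph G" and disj: "X1 \<inter> X2 = {}"
    and "subgraph H1 (induce G X1)" "subgraph H2 (induce G X2)"
  shows "subgraph (mg_union H1 H2) (induce G (X1 \<union> X2))"
proof -
  have "edges H1 + edges H2 \<subseteq># filter_mset (\<lambda>e. e \<subseteq> X1) (edges G) + filter_mset (\<lambda>e. e \<subseteq> X2) (edges G)"
    using assms(3,4) by (simp add: subgraph_def subset_mset.add_mono)
  also have "\<dots> = filter_mset (\<lambda>e. e \<subseteq> X1 \<or> e \<subseteq> X2) (edges G)"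
    using wf_mgraph_edgeD(2)[OF wf] disj by (intro filter_mset_add_disjoint) blast
  also have "\<dots> \<subseteq># filter_mset (\<lambda>e. e \<subseteq> X1 \<union> X2) (edges G)"
    by (rule filter_mset_mono_strong) auto
  finally show ?thesis
    using assms(3,4) by (auto simp: subgraph_def intro: wf_mgraph_mg_union)
qed

lemma is_certificate_mg_union:
  assumes wf: "wf_mgraph G" and disj: "X1 \<inter> X2 = {}"
    and cert: "is_certificate (induce G X1) C1 H1" "is_certificate (induce G X2) C2 H2"
  shows "is_certificate (induce G (X1 \<union> X2)) (C1 \<union> C2) (mg_union H1 H2)"
proof -
  have wf_H: "wf_mgraph H1" "wf_mgraph H2" and "verts H1 \<subseteq> X1" "verts H2 \<subseteq> X2"
    using cert by (auto simp: is_certificate_def subgraph_def)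
  then have disj_H: "verts H1 \<inter> verts H2 = {}" using disj by blast
  have fvs: "is_fvs H1 C1" "is_fvs H2 C2" using cert by (simp_all add: is_certificate_def)
  have "card (C1 \<union> C2) = card C1 + card C2"
    using fvs disj_H wf_H by (intro card_Un_disjoint) (auto simp: is_fvs_def wf_mgraph_def intro: finite_subset)
  also have "\<dots> = fvs (mg_union H1 H2)"
    using cert fvs_mg_union[OF wf_H disj_H] by (simp add: is_certificate_def)
  finally show ?thesis
    using subgraph_mg_union_induce[OF wf disj] is_fvs_mg_union[OF wf_H disj_H fvs] cert
    by (simp add: is_certificate_def)
qed

section \<open>Combining feedback vertex cuts\<close>

(* W1 and W play the roles of V - (C1 \<union> F1) and V - (C1 \<union> C2 \<union> F1 \<union> F2). *)
locale fvc_pair =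
  fixes G :: "'a mgraph" and F1 F2 W1 W :: "'a set"
  assumes wf: "wf_mgraph G"
    and F2_W1: "F2 \<subseteq> W1" and W_W1: "W \<subseteq> W1" and F1_W1: "F1 \<inter> W1 = {}" and F2_W: "F2 \<inter> W = {}"
    and acyclic_F1: "acyclic_mg (induce G F1)" and acyclic_F2: "acyclic_mg (induce G F2)"
    and tree_F1: "\<And>x. x \<in> verts G \<inter> F1 \<Longrightarrow> e_between G (component_of (induce G F1) x) W1 \<le> 1"
    and tree_F2: "\<And>x. x \<in> verts G \<inter> F2 \<Longrightarrow> e_between G (component_of (induce G F2) x) W \<le> 1"
begin

abbreviation "T1 \<equiv> component_of (induce G F1)"
abbreviation "T2 \<equiv> component_of (induce G F2)"
abbreviation "T \<equiv> component_of (induce G (F1 \<union> F2))"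

lemma wf_induce: "wf_mgraph (induce G X)"
  by (rule wf_mgraph_induce[OF wf])

lemma F1_F2: "F1 \<inter> F2 = {}"
  using F1_W1 F2_W1 by blast

lemma edge_leaving_T1:
  assumes "e \<in># edges G" "e \<subseteq> F1 \<union> F2" "e \<inter> T1 x \<noteq> {}" "\<not> e \<subseteq> T1 x"
  shows "e \<inter> W1 \<noteq> {}"
proof -
  obtain y u where y: "y \<in> e" "y \<in> T1 x" and u: "u \<in> e" "u \<notin> T1 x" using assms(3,4) by blast
  have "u \<in> F1 \<Longrightarrow> adj (induce G F1) y u"
    using wf_mgraph_edge_pair[OF wf assms(1) y(1) u(1)] y u component_of_induce_subset[of G] assms(1)
    by (auto simp: adj_def)
  then have "u \<notin> F1" using component_of_adj[OF wf_induce y(2)] u(2) by blast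
  then show ?thesis using u(1) assms(2) F2_W1 by blast
qed

lemma no_parallel_F1_F2:
  assumes "u \<in> F1" "v \<in> F2"
  shows "count (edges G) {u, v} \<le> 1"
proof (rule ccontr)
  assume "\<not> ?thesis"
  then have e: "{u, v} \<in># edges G" "{u, v} \<in># edges G - {#{u, v}#}"
    by (simp_all add: in_diff_count flip: count_greater_zero_iff)
  then have "u \<in> verts G \<inter> F1" using wf_mgraph_edgeD(1)[OF wf] assms(1) by blast
  moreover have "{u, v} \<inter> T1 u \<noteq> {}" "{u, v} \<inter> W1 \<noteq> {}"
    using calculation component_of_self[of u "induce G F1"] assms(2) F2_W1 by auto
  ultimately show False using e_between_le_1D[OF tree_F1 e] by blast
qed

lemma no_cycle_meeting_F1:
  assumes cyc: "is_cycle (verts G \<inter> (F1 \<union> F2)) (edges (induce G (F1 \<union> F2))) vs"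
    and x: "x \<in> set vs" "x \<in> F1" and b: "b \<in> set vs" "b \<notin> F1"
  shows False
proof -
  have x': "x \<in> verts G \<inter> F1" using cyc x by (auto simp: is_cycle_def)
  have "x \<in> T1 x" "b \<notin> T1 x"
    using x' component_of_self[of x "induce G F1"] component_of_induce_subset[of G] b(2) by auto
  then obtain e e' where e: "e \<in># edges (induce G (F1 \<union> F2))"
      "e' \<in># edges (induce G (F1 \<union> F2)) - {#e#}"
    and cross: "e \<inter> T1 x \<noteq> {}" "\<not> e \<subseteq> T1 x" "e' \<inter> T1 x \<noteq> {}" "\<not> e' \<subseteq> T1 x"
    by (rule is_cycle_crossing[OF cyc x(1) _ b(1)])
  have G: "e \<in># edges G" "e \<subseteq> F1 \<union> F2" "e' \<in># edges G - {#e#}" "e' \<subseteq> F1 \<union> F2"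
    using e by (auto simp: in_diff_count split: if_splits)
  have "e \<inter> W1 \<noteq> {}" "e' \<inter> W1 \<noteq> {}"
    using edge_leaving_T1[OF G(1,2) cross(1,2)] edge_leaving_T1[OF _ G(4) cross(3,4)] G(3)
    by (auto dest: in_diffD)
  then show False
    using e_between_le_1D[OF tree_F1[OF x'] G(1,3) cross(1) _ cross(3)] by blast
qed

lemma acyclic_F1_F2: "acyclic_mg (induce G (F1 \<union> F2))"
proof -
  have "count (edges G) {v} = 0" if "v \<in> F1 \<union> F2" for v
  proof -
    have "count (edges (induce G F1)) {v} = 0" "count (edges (induce G F2)) {v} = 0"
      using acyclic_F1 acyclic_F2 unfolding acyclic_mg_iff by blast+
    with that show ?thesis by auto
  qed
  moreover have "count (edges G) {u, v} \<le> 1"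
    if uv: "u \<noteq> v" "u \<in> F1 \<union> F2" "v \<in> F1 \<union> F2" for u v
  proof -
    have induced: "count (edges (induce G F1)) {u, v} \<le> 1" "count (edges (induce G F2)) {u, v} \<le> 1"
      using acyclic_F1 acyclic_F2 uv(1) unfolding acyclic_mg_iff by blast+
    consider "u \<in> F1" "v \<in> F1" | "u \<in> F2" "v \<in> F2" | "u \<in> F1" "v \<in> F2"
      | "v \<in> F1" "u \<in> F2"
      using uv(2,3) by blast
    then show ?thesis
    proof cases
      case 1
      then show ?thesis using induced(1) by simp
    next
      case 2
      then show ?thesis using induced(2) by simp
    next
      case 3
      then show ?thesis by (rule no_parallel_F1_F2)
    next
      case 4
      then show ?thesis using no_parallel_F1_F2[of v u] by (simp add: insert_commute)
    qed
  qed
  moreover have "\<not> is_cycle (verts G \<inter> (F1 \<union> F2)) (edges (induce G (F1 \<union> F2))) vs" for vs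
  proof
    assume cyc: "is_cycle (verts G \<inter> (F1 \<union> F2)) (edges (induce G (F1 \<union> F2))) vs"
    then have V: "set vs \<subseteq> verts G \<inter> (F1 \<union> F2)" by (simp add: is_cycle_def)
    consider "set vs \<subseteq> F1" | "set vs \<subseteq> F2" | x b where "x \<in> set vs" "x \<in> F1" "b \<in> set vs" "b \<notin> F1"
      using V by blast
    then show False
    proof cases
      case 1
      show False
      proof (rule acyclic_mg_no_cycle[OF acyclic_F1 cyc])
        show "set vs \<subseteq> verts (induce G F1)" using 1 V by simp
      qed (use 1 in simp)
    next
      case 2
      show False
      proof (rule acyclic_mg_no_cycle[OF acyclic_F2 cyc])
        show "set vs \<subseteq> verts (induce G F2)" using 2 V by simp
      qed (use 2 in simp)
    next
      case 3
      then show False by (rule no_cycle_meeting_F1[OF cyc])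
    qed
  qed
  ultimately show ?thesis unfolding acyclic_mg_iff by simp
qed

(* Each attached tree of G[F1] has used up its only edge to W1, so nothing leaves
   attached w towards W except through T2 w. *)
definition attached :: "'a \<Rightarrow> 'a set" where
  "attached w = T2 w \<union> \<Union> {T1 b |b. b \<in> verts G \<inter> F1 \<and> (\<exists>a \<in> T2 w. {a, b} \<in># edges G)}"

lemma attached_closed:
  assumes y: "y \<in> attached w" and yz: "adj (induce G (F1 \<union> F2)) y z"
  shows "z \<in> attached w"
proof -
  have e: "y \<noteq> z" "{y, z} \<in># edges G" "z \<in> F1 \<union> F2" using yz by (simp_all add: adj_def)
  have z: "z \<in> verts G" using adj_in_verts[OF wf, of y z] yz by simp
  from y consider (in_T2) "y \<in> T2 w"
    | (in_T1) a b where "y \<in> T1 b" "b \<in> verts G \<inter> F1" "a \<in> T2 w" "{a, b} \<in># edges G"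
    unfolding attached_def by blast
  then show ?thesis
  proof cases
    case in_T2
    show ?thesis
    proof (cases "z \<in> F2")
      case True
      then have "adj (induce G F2) y z" using yz in_T2 component_of_induce_subset[of G] by auto
      then show ?thesis using component_of_adj[OF wf_induce in_T2] by (simp add: attached_def)
    next
      case False
      then have "z \<in> verts G \<inter> F1" "z \<in> T1 z" using e(3) z component_of_self[of z] by auto
      moreover have "{y, z} \<in># edges G" by (rule e(2))
      ultimately show ?thesis using in_T2 unfolding attached_def by blast
    qed
  next
    case in_T1
    have y_F1: "y \<in> F1" using in_T1(1) component_of_induce_subset[of G] by blast
    show ?thesis
    proof (cases "z \<in> F2")
      case True
      have a_F2: "a \<in> F2" using in_T1(3) component_of_induce_subset[of G] by blast
      have "{y, z} = {a, b}"
      proof (rule ccontr)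
        assume "{y, z} \<noteq> {a, b}"
        then have "{y, z} \<in># edges G - {#{a, b}#}" using e(2) by (simp add: in_diff_count)
        moreover have "{a, b} \<inter> T1 b \<noteq> {}" using component_of_self[of b] in_T1(2) by auto
        ultimately show False
          using e_between_le_1D[OF tree_F1[OF in_T1(2)] in_T1(4)] in_T1(1) True a_F2 F2_W1 by blast
      qed
      moreover have "a \<noteq> y" using a_F2 y_F1 F1_F2 by blast
      ultimately have "z = a" by (auto simp: doubleton_eq_iff)
      then show ?thesis using in_T1(3) by (simp add: attached_def)
    next
      case False
      then have "adj (induce G F1) y z" using yz y_F1 e(3) by auto
      then have "z \<in> T1 b" using component_of_adj[OF wf_induce in_T1(1)] by blast
      then show ?thesis using in_T1(2-4) unfolding attached_def by blast
    qed
  qed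
qed

lemma attached_links_W:
  assumes e: "e \<in># edges G" "e \<inter> attached w \<noteq> {}" "e \<inter> W \<noteq> {}"
  shows "e \<inter> T2 w \<noteq> {}"
proof (rule ccontr)
  assume not_T2: "\<not> ?thesis"
  obtain x y where x: "x \<in> e" "x \<in> attached w" and y: "y \<in> e" "y \<in> W" using e(2,3) by blast
  with not_T2 obtain a b where ab: "x \<in> T1 b" "b \<in> verts G \<inter> F1" "a \<in> T2 w" "{a, b} \<in># edges G"
    unfolding attached_def by blast
  have x_F1: "x \<in> F1" and a_F2: "a \<in> F2" using ab(1,3) component_of_induce_subset[of G] by blast+
  then have "e = {x, y}" using wf_mgraph_edge_pair[OF wf e(1) x(1) y(1)] y(2) W_W1 F1_W1 by blast
  moreover have "a \<noteq> x" "a \<noteq> y" using x_F1 a_F2 y(2) F1_F2 F2_W by blast+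
  ultimately have "e \<in># edges G - {#{a, b}#}" using e(1) by (auto simp: in_diff_count)
  moreover have "{a, b} \<inter> T1 b \<noteq> {}" using component_of_self[of b] ab(2) by auto
  ultimately show False
    using e_between_le_1D[OF tree_F1[OF ab(2)] ab(4)] x ab(1) y a_F2 F2_W1 W_W1 by blast
qed

lemma tree_meeting_F2:
  assumes "w \<in> verts G \<inter> F2"
  shows "e_between G (T w) W \<le> 1"
proof -
  have "w \<in> attached w" using assms component_of_self[of w] unfolding attached_def by auto
  then have "T w \<subseteq> attached w" using attached_closed by (rule component_of_subset_closed)
  then have "e_between G (T w) W \<le> e_between G (T2 w) W"
    using attached_links_W by (intro e_between_le) blast
  also have "\<dots> \<le> 1" by (rule tree_F2[OF assms])
  finally show ?thesis .
qed

lemma tree_avoiding_F2: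
  assumes x: "x \<in> verts G \<inter> F1" and avoid: "T x \<inter> F2 = {}"
  shows "e_between G (T x) W \<le> 1"
proof -
  have "T x \<subseteq> T1 x \<inter> T x"
  proof (rule component_of_subset_closed)
    show "x \<in> T1 x \<inter> T x" using x component_of_self[of x] by auto
  next
    fix y z assume y: "y \<in> T1 x \<inter> T x" and yz: "adj (induce G (F1 \<union> F2)) y z"
    then have "z \<in> T x" using component_of_adj[OF wf_induce] by blast
    then have "z \<in> F1" using avoid component_of_induce_subset[of G] by blast
    then have "adj (induce G F1) y z" using yz y component_of_induce_subset[of G] by auto
    then show "z \<in> T1 x \<inter> T x" using component_of_adj[OF wf_induce] y \<open>z \<in> T x\<close> by blast
  qed
  then have "e_between G (T x) W \<le> e_between G (T1 x) W1"
    using W_W1 by (intro e_between_le) blast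
  also have "\<dots> \<le> 1" by (rule tree_F1[OF x])
  finally show ?thesis .
qed

lemma tree_links_W:
  assumes x: "x \<in> verts G \<inter> (F1 \<union> F2)"
  shows "e_between G (T x) W \<le> 1"
proof (cases "T x \<inter> F2 = {}")
  case True
  then have "x \<in> F1" using x component_of_self[of x "induce G (F1 \<union> F2)"] by auto
  then show ?thesis using tree_avoiding_F2 x True by blast
next
  case False
  then obtain w where w: "w \<in> T x" "w \<in> F2" by blast
  have "w \<in> verts G \<inter> F2" using w component_of_induce_subset[of G] by blast
  then show ?thesis using tree_meeting_F2 component_of_eq[OF w(1)] by metis
qed

end

lemma is_fvc_extend:
  assumes wf: "wf_mgraph G" and fvc1: "is_fvc G C1 F1"
    and fvc2: "is_fvc (del_verts G (C1 \<union> F1)) C2 F2"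
  shows "is_fvc G (C1 \<union> C2) (F1 \<union> F2)"
proof -
  define W1 where "W1 = verts G - (C1 \<union> F1)"
  define W where "W = verts G - (C1 \<union> C2 \<union> (F1 \<union> F2))"
  have G1: "C1 \<subseteq> verts G" "F1 \<subseteq> verts G" "C1 \<inter> F1 = {}" "acyclic_mg (induce G F1)"
    "\<forall>x \<in> verts G \<inter> F1. e_between G (component_of (induce G F1) x) W1 \<le> 1"
    using fvc1 by (simp_all add: is_fvc_iff W1_def)
  have G2: "C2 \<subseteq> W1" "F2 \<subseteq> W1" "C2 \<inter> F2 = {}"
    using fvc2 by (auto simp: is_fvc_iff W1_def)
  have induce_F2: "induce (del_verts G (C1 \<union> F1)) F2 = induce G F2"
    using induce_del_verts[OF wf] G2(2) unfolding W1_def by blast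
  have W_eq: "verts (del_verts G (C1 \<union> F1)) - (C2 \<union> F2) = W"
    unfolding W_def by auto
  have tree_F2: "e_between G (component_of (induce G F2) x) W \<le> 1" if "x \<in> verts G \<inter> F2" for x
  proof -
    have "x \<in> verts (del_verts G (C1 \<union> F1)) \<inter> F2" using that G2(2) W1_def by auto
    then have "e_between (del_verts G (C1 \<union> F1)) (component_of (induce G F2) x) W \<le> 1"
      using fvc2 by (simp only: is_fvc_iff induce_F2 W_eq)
    moreover have "component_of (induce G F2) x \<subseteq> verts G \<inter> F2"
      by (rule component_of_induce_subset)
    then have "component_of (induce G F2) x \<inter> W = {}"
      "component_of (induce G F2) x \<union> W \<subseteq> verts G - (C1 \<union> F1)"
      using G2(2) unfolding W_def W1_def by auto
    ultimately show ?thesis using e_between_del_verts[OF wf] by simp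
  qed
  interpret fvc_pair G F1 F2 W1 W
    using wf G1 G2 tree_F2 fvc2 induce_F2 unfolding is_fvc_iff W_def W1_def by unfold_locales auto
  show ?thesis
    using G1 G2 acyclic_F1_F2 tree_links_W unfolding is_fvc_iff W_def W1_def by auto
qed

theorem lemma12:
  fixes G :: "'a mgraph" and z :: nat and C1 F1 C2 F2 :: "'a set"
  assumes "wf_mgraph G"
    and "is_z_antler G z C1 F1"
    and "is_z_antler (del_verts G (C1 \<union> F1)) z C2 F2"
  shows "is_z_antler G z (C1 \<union> C2) (F1 \<union> F2)"
proof -
  have fvc1: "is_fvc G C1 F1" and fvc2: "is_fvc (del_verts G (C1 \<union> F1)) C2 F2"
    using assms(2,3) by (simp_all add: is_z_antler_def is_antler_def)
  have disj: "(C1 \<union> F1) \<inter> (C2 \<union> F2) = {}" using fvc2 by (auto simp: is_fvc_def)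
  obtain H1 where H1: "is_certificate (induce G (C1 \<union> F1)) C1 H1" "certificate_order H1 C1 z"
    using assms(2) by (auto simp: is_z_antler_def)
  obtain H2 where H2: "is_certificate (induce G (C2 \<union> F2)) C2 H2" "certificate_order H2 C2 z"
    using assms(3) induce_del_verts[OF assms(1)] disj by (auto simp: is_z_antler_def Int_commute)
  let ?H = "mg_union H1 H2" and ?K = "induce G (C1 \<union> C2 \<union> (F1 \<union> F2))"
  have "C1 \<union> F1 \<union> (C2 \<union> F2) = C1 \<union> C2 \<union> (F1 \<union> F2)" by blast
  then have cert: "is_certificate ?K (C1 \<union> C2) ?H"
    using is_certificate_mg_union[OF assms(1) disj H1(1) H2(1)] by simp
  have "certificate_order ?H (C1 \<union> C2) z"
    using H1 H2 disj
    by (intro certificate_order_mg_union) (auto simp: is_certificate_def subgraph_def is_fvs_def)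
  moreover have "card (C1 \<union> C2) \<le> fvs ?K"
    using cert fvs_mono[OF wf_mgraph_induce[OF assms(1)]] by (simp add: is_certificate_def)
  ultimately show ?thesis
    using is_fvc_extend[OF assms(1) fvc1 fvc2] cert unfolding is_z_antler_def is_antler_def by blast
qed

end
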